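(* Let $n,t\ge 0$, $q\ge 2$, $b\ge 1$. For every $\boldsymbol{x}\in\Sigma_q^n$, \[ |\mathcal{I}_{t,b}(\boldsymbol{x})| = q^{t(b-1)}\sum_{i=0}^{t}\binom{n+t}{i}(q-1)^i . \] In particular, $I_{q,b}(n,t)=q^{t(b-1)}\sum_{i=0}^{t}\binom{n+t}{i}(q-1)^i$.
   Context: $\Sigma_q=\{0,1,\ldots,q-1\}$ and $\Sigma_q^n$ is the set of length-$n$ sequences over $\Sigma_q$ ($\Sigma_q^0$ contains only the empty sequence). A $b$-burst-insertion at position $i\in[1,n+1]$ transforms $x_1\cdots x_n$ into $x_1\cdots x_{i-1}y_1\cdots y_b x_i\cdots x_n$ for an arbitrary $y_1\cdots y_b\in\Sigma_q^b$. $\mathcal{I}_{t,b}(\boldsymbol{x})$ is the set of all sequences of length $n+tb$ obtainable from $\boldsymbol{x}$ by $t$ successive $b$-burst-insertions ($\mathcal{I}_{0,b}(\boldsymbol{x})=\{\boldsymbol{x}\}$). $I_{q,b}(n,t)=\max\{|\mathcal{I}_{t,b}(\boldsymbol{x})|:\boldsymbol{x}\in\Sigma_q^n\}$. Convention: $\binom{m}{i}=0$ if $m<i$. *)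

theory Defs
  imports Main
begin

definition seqs :: "nat \<Rightarrow> nat \<Rightarrow> nat list set" where
  "seqs q n = {x. length x = n \<and> set x \<subseteq> {..<q}}"

text \<open>All results of a single b-burst-insertion into x (insert y, |y| = b, after the first i
symbols, 0 <= i <= |x|; i.e. at position i+1 in the paper's 1-based convention).\<close>

definition burst_ins :: "nat \<Rightarrow> nat \<Rightarrow> nat list \<Rightarrow> nat list set" where
  "burst_ins q b x = {take i x @ y @ drop i x | i y. i \<le> length x \<and> y \<in> seqs q b}"

fun ins_ball :: "nat \<Rightarrow> nat \<Rightarrow> nat \<Rightarrow> nat list \<Rightarrow> nat list set" where
  "ins_ball q 0 b x = {x}"
| "ins_ball q (Suc t) b x = (\<Union>z \<in> ins_ball q t b x. burst_ins q b z)"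

definition I_max :: "nat \<Rightarrow> nat \<Rightarrow> nat \<Rightarrow> nat \<Rightarrow> nat" where
  "I_max q b n t = Max ((\<lambda>x. card (ins_ball q t b x)) ` seqs q n)"

end

theory Submission
  imports Defs
begin

text \<open>
  Let a be the first symbol of x. A word z obtained from a x by t+1 burst-insertions either
  starts with a, and then this a can be taken to be the original one, so z = a z' with z'
  obtained from the tail by t+1 insertions; or z starts with a symbol c different from a,
  and then its first b symbols form a burst whose removal leaves a word obtained from a x by t
  insertions. These two cases are disjoint, which gives the recursion
  N(n+1, t+1) = N(n, t+1) + (q-1) q^(b-1) N(n+1, t) with N(0, t) = q^(tb);
  the closed form satisfies the same recursion by Pascal's rule.
\<close>

lemma mem_burst_ins_iff:
  "z \<in> burst_ins q b u \<longleftrightarrow> (\<exists>i y. z = take i u @ y @ drop i u \<and> i \<le> length u \<and> y \<in> seqs q b)"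
  unfolding burst_ins_def by blast

lemma seqs_eq_lists_length: "seqs q n = {xs. set xs \<subseteq> {..<q} \<and> length xs = n}"
  unfolding seqs_def by auto

lemma card_seqs: "card (seqs q n) = q ^ n"
  by (simp add: seqs_eq_lists_length card_lists_length_eq)

lemma finite_seqs: "finite (seqs q n)"
  by (simp add: seqs_eq_lists_length finite_lists_length_eq)

lemma append_mem_burst_ins: "y \<in> seqs q b \<Longrightarrow> y @ u \<in> burst_ins q b u"
  unfolding mem_burst_ins_iff by (metis append_Nil drop0 le0 take0)

lemma append_mem_ins_ball_Suc:
  "y \<in> seqs q b \<Longrightarrow> w \<in> ins_ball q t b x \<Longrightarrow> y @ w \<in> ins_ball q (Suc t) b x"
  using append_mem_burst_ins by fastforce

lemma length_ins_ball: "z \<in> ins_ball q t b x \<Longrightarrow> length z = length x + t * b"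
proof (induction t arbitrary: z)
  case (Suc t)
  then obtain u i y where "u \<in> ins_ball q t b x" "z = take i u @ y @ drop i u"
    "i \<le> length u" "y \<in> seqs q b"
    by (auto simp: mem_burst_ins_iff)
  with Suc.IH show ?case by (auto simp: seqs_def)
qed simp

lemma set_ins_ball_subset:
  "set x \<subseteq> {..<q} \<Longrightarrow> z \<in> ins_ball q t b x \<Longrightarrow> set z \<subseteq> {..<q}"
proof (induction t arbitrary: z)
  case (Suc t)
  then obtain u i y where u: "u \<in> ins_ball q t b x" "z = take i u @ y @ drop i u"
    "y \<in> seqs q b"
    by (auto simp: mem_burst_ins_iff)
  with Suc have "set u \<subseteq> {..<q}" by blast
  with u show ?case
    using set_take_subset[of i u] set_drop_subset[of i u] by (auto simp: seqs_def)
qed simp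

lemma ins_ball_subset_seqs:
  "set x \<subseteq> {..<q} \<Longrightarrow> ins_ball q t b x \<subseteq> seqs q (length x + t * b)"
  using length_ins_ball set_ins_ball_subset unfolding seqs_def by blast

lemma finite_ins_ball: "set x \<subseteq> {..<q} \<Longrightarrow> finite (ins_ball q t b x)"
  using ins_ball_subset_seqs finite_seqs by (rule finite_subset)

lemma ins_ball_Nil: "ins_ball q t b [] = seqs q (t * b)"
proof
  show "seqs q (t * b) \<subseteq> ins_ball q t b []"
  proof (induction t)
    case 0
    then show ?case by (auto simp: seqs_def)
  next
    case (Suc t)
    show ?case
    proof
      fix z assume z: "z \<in> seqs q (Suc t * b)"
      then have "take b z \<in> seqs q b" "drop b z \<in> seqs q (t * b)"
        using set_take_subset[of b z] set_drop_subset[of b z] by (auto simp: seqs_def)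
      with Suc.IH have "take b z @ drop b z \<in> ins_ball q (Suc t) b []"
        by (blast intro: append_mem_ins_ball_Suc)
      then show "z \<in> ins_ball q (Suc t) b []" by simp
    qed
  qed
qed (use ins_ball_subset_seqs[of "[]"] in simp)

lemma ins_ball_trans:
  "z \<in> ins_ball q s b x \<Longrightarrow> w \<in> ins_ball q t b z \<Longrightarrow> w \<in> ins_ball q (s + t) b x"
  by (induction t arbitrary: w) auto

lemma append_left_mem_burst_ins:
  assumes "w \<in> burst_ins q b u"
  shows "p @ w \<in> burst_ins q b (p @ u)"
proof -
  obtain i y where "w = take i u @ y @ drop i u" "i \<le> length u" "y \<in> seqs q b"
    using assms by (auto simp: mem_burst_ins_iff)
  then have "p @ w = take (length p + i) (p @ u) @ y @ drop (length p + i) (p @ u)"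
    "length p + i \<le> length (p @ u)" "y \<in> seqs q b"
    by auto
  then show ?thesis unfolding mem_burst_ins_iff by blast
qed

lemma append_left_mem_ins_ball:
  "w \<in> ins_ball q t b v \<Longrightarrow> p @ w \<in> ins_ball q t b (p @ v)"
  by (induction t arbitrary: w) (auto intro: append_left_mem_burst_ins)

text \<open>A result starting with an inserted burst a p may instead be read as the burst p a inserted
  just after the original leading a.\<close>

lemma append_mem_ins_ball_Cons:
  assumes "w \<in> ins_ball q s b (a # x)" and "p @ [a] \<in> seqs q b"
  shows "p @ w \<in> ins_ball q (Suc s) b x"
proof -
  have "(p @ [a]) @ x \<in> ins_ball q 1 b x"
    using append_mem_burst_ins[OF assms(2)] by simp
  moreover have "p @ w \<in> ins_ball q s b ((p @ [a]) @ x)"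
    using append_left_mem_ins_ball[OF assms(1)] by simp
  ultimately show ?thesis using ins_ball_trans by fastforce
qed

lemma Cons_mem_ins_ball_Cons:
  "a # z \<in> ins_ball q t b (a # x) \<Longrightarrow> z \<in> ins_ball q t b x"
proof (induction t arbitrary: z)
  case (Suc t)
  then obtain u i y where u: "u \<in> ins_ball q t b (a # x)" "a # z = take i u @ y @ drop i u"
    "i \<le> length u" "y \<in> seqs q b"
    by (auto simp: mem_burst_ins_iff)
  show ?case
  proof (cases i)
    case 0
    show ?thesis
    proof (cases y)
      case Nil
      with u 0 Suc.IH have "z \<in> ins_ball q t b x" by simp
      moreover have "z \<in> burst_ins q b z"
        using u(4) Nil unfolding mem_burst_ins_iff by (metis append.left_neutral drop0 le0 take0)
      ultimately show ?thesis by auto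
    next
      case (Cons c y')
      with u 0 have "z = y' @ u" "y' @ [a] \<in> seqs q b"
        by (auto simp: seqs_def)
      with u(1) show ?thesis using append_mem_ins_ball_Cons by blast
    qed
  next
    case (Suc i')
    with u(2,3) obtain u' where u': "u = a # u'" "z = take i' u' @ y @ drop i' u'"
      "i' \<le> length u'"
      by (cases u) auto
    with u(1) Suc.IH have "u' \<in> ins_ball q t b x" by blast
    moreover have "z \<in> burst_ins q b u'"
      using u'(2,3) u(4) unfolding mem_burst_ins_iff by blast
    ultimately show ?thesis by auto
  qed
qed simp

lemma drop_mem_burst_ins:
  assumes z: "z \<in> burst_ins q b u" and u: "set u \<subseteq> {..<q}" "b \<le> length u"
  shows "drop b z \<in> burst_ins q b (drop b u)"
proof -
  obtain i y where zy: "z = take i u @ y @ drop i u" "i \<le> length u" "y \<in> seqs q b"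
    using z by (auto simp: mem_burst_ins_iff)
  then have ly: "length y = b" by (simp add: seqs_def)
  show ?thesis
  proof (cases "b \<le> i")
    case True
    with zy ly have "drop b z = take (i - b) (drop b u) @ y @ drop (i - b) (drop b u)"
      "i - b \<le> length (drop b u)"
      by (auto simp: drop_take)
    with zy(3) show ?thesis unfolding mem_burst_ins_iff by blast
  next
    case False
    let ?p = "drop (b - i) y @ take (b - i) (drop i u)"
    have "drop i u = take (b - i) (drop i u) @ drop b u"
      using False by (metis append_take_drop_id drop_drop le_add_diff_inverse2 nat_le_linear)
    with zy ly False have "drop b z = ?p @ drop b u" by simp
    moreover have "?p \<in> seqs q b"
      using zy(3) ly False u set_drop_subset[of "b - i" y]
        set_take_subset[of "b - i" "drop i u"] set_drop_subset[of i u]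
      by (auto simp: seqs_def)
    ultimately show ?thesis using append_mem_burst_ins by metis
  qed
qed

lemma drop_mem_ins_ball_Cons:
  assumes x: "set (a # x) \<subseteq> {..<q}"
  shows "z \<in> ins_ball q t b (a # x) \<Longrightarrow> hd z \<noteq> a \<Longrightarrow> 0 < t \<and> drop b z \<in> ins_ball q (t - 1) b (a # x)"
proof (induction t arbitrary: z)
  case (Suc t)
  then obtain u i y where u: "u \<in> ins_ball q t b (a # x)" "z = take i u @ y @ drop i u"
    "i \<le> length u" "y \<in> seqs q b"
    by (auto simp: mem_burst_ins_iff)
  show ?case
  proof (cases i)
    case 0
    with u show ?thesis by (simp add: seqs_def)
  next
    case (Suc i')
    with u(2,3) have "hd u = hd z" by (cases u) auto
    with Suc.prems Suc.IH[OF u(1)] have IH: "0 < t" "drop b u \<in> ins_ball q (t - 1) b (a # x)"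
      by simp_all
    have "z \<in> burst_ins q b u"
      using u(2-4) unfolding mem_burst_ins_iff by blast
    moreover have "b \<le> length u"
      using length_ins_ball[OF u(1)] IH(1) by (cases t) auto
    ultimately have "drop b z \<in> burst_ins q b (drop b u)"
      using set_ins_ball_subset[OF x u(1)] drop_mem_burst_ins by blast
    with IH show ?thesis by (cases t) auto
  qed
qed simp

lemma ins_ball_Suc_Cons:
  assumes "1 \<le> b" and x: "set (a # x) \<subseteq> {..<q}"
  shows "ins_ball q (Suc t) b (a # x) = Cons a ` ins_ball q (Suc t) b x \<union>
     (\<lambda>(c, y, w). c # y @ w) ` (({..<q} - {a}) \<times> seqs q (b - 1) \<times> ins_ball q t b (a # x))"
    (is "_ = ?A \<union> ?g ` ?P")
proof
  show "ins_ball q (Suc t) b (a # x) \<subseteq> ?A \<union> ?g ` ?P"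
  proof
    fix z assume z: "z \<in> ins_ball q (Suc t) b (a # x)"
    obtain c z' where zc: "z = c # z'"
      using length_ins_ball[OF z] by (cases z) auto
    show "z \<in> ?A \<union> ?g ` ?P"
    proof (cases "c = a")
      case True
      with z zc Cons_mem_ins_ball_Cons show ?thesis by blast
    next
      case False
      with zc drop_mem_ins_ball_Cons[OF x z] have "drop b z \<in> ins_ball q t b (a # x)"
        by simp
      moreover have "take (b - 1) z' \<in> seqs q (b - 1)" "c \<in> {..<q} - {a}"
        using length_ins_ball[OF z] set_ins_ball_subset[OF x z] set_take_subset[of "b - 1" z'] False
        by (auto simp: zc seqs_def)
      moreover have "z = ?g (c, take (b - 1) z', drop b z)"
        using \<open>1 \<le> b\<close> by (cases b) (simp_all add: zc)
      ultimately show ?thesis by blast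
    qed
  qed
next
  have "?A \<subseteq> ins_ball q (Suc t) b (a # x)"
    using append_left_mem_ins_ball[of _ q "Suc t" b x "[a]"] by auto
  moreover have "?g ` ?P \<subseteq> ins_ball q (Suc t) b (a # x)"
  proof
    fix z assume "z \<in> ?g ` ?P"
    then obtain c y w where z: "z = c # y @ w" "c \<in> {..<q} - {a}" "y \<in> seqs q (b - 1)"
      "w \<in> ins_ball q t b (a # x)"
      by auto
    with \<open>1 \<le> b\<close> have "c # y \<in> seqs q b" by (auto simp: seqs_def)
    with z show "z \<in> ins_ball q (Suc t) b (a # x)"
      using append_mem_ins_ball_Suc by fastforce
  qed
  ultimately show "?A \<union> ?g ` ?P \<subseteq> ins_ball q (Suc t) b (a # x)" by blast
qed

lemma card_ins_ball_Suc_Cons: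
  assumes "1 \<le> b" and x: "set (a # x) \<subseteq> {..<q}"
  shows "card (ins_ball q (Suc t) b (a # x)) =
    card (ins_ball q (Suc t) b x) + (q - 1) * q ^ (b - 1) * card (ins_ball q t b (a # x))"
proof -
  let ?A = "Cons a ` ins_ball q (Suc t) b x"
  let ?P = "({..<q} - {a}) \<times> seqs q (b - 1) \<times> ins_ball q t b (a # x)"
  let ?g = "\<lambda>(c, y, w). c # y @ w :: nat list"
  have "finite ?A" "finite (?g ` ?P)"
    using x finite_ins_ball[of x q "Suc t" b]
    by (simp_all del: ins_ball.simps add: finite_ins_ball finite_seqs)
  moreover have "?A \<inter> ?g ` ?P = {}" by auto
  ultimately have "card (ins_ball q (Suc t) b (a # x)) = card ?A + card (?g ` ?P)"
    by (simp only: ins_ball_Suc_Cons[OF assms] card_Un_disjoint)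
  also have "card ?A = card (ins_ball q (Suc t) b x)"
    by (rule card_image) simp
  also have "card (?g ` ?P) = card ?P"
    by (rule card_image) (auto simp: inj_on_def seqs_def)
  also have "card ?P = (q - 1) * q ^ (b - 1) * card (ins_ball q t b (a # x))"
    using x by (simp add: card_cartesian_product card_seqs)
  finally show ?thesis .
qed

definition ins_ball_size :: "nat \<Rightarrow> nat \<Rightarrow> nat \<Rightarrow> nat \<Rightarrow> nat" where
  "ins_ball_size q b n t = q ^ (t * (b - 1)) * (\<Sum>i = 0..t. ((n + t) choose i) * (q - 1) ^ i)"

lemma sum_choose_Suc_Suc:
  fixes r m t :: nat
  shows "(\<Sum>i\<le>Suc t. (Suc m choose i) * r ^ i) =
    (\<Sum>i\<le>Suc t. (m choose i) * r ^ i) + r * (\<Sum>i\<le>t. (m choose i) * r ^ i)"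
proof -
  have "(\<Sum>i\<le>Suc t. (Suc m choose i) * r ^ i) = 1 + (\<Sum>i\<le>t. (Suc m choose Suc i) * r ^ Suc i)"
    by (subst sum.atMost_Suc_shift) simp
  also have "\<dots> = 1 + (\<Sum>i\<le>t. (m choose Suc i) * r ^ Suc i) + r * (\<Sum>i\<le>t. (m choose i) * r ^ i)"
    by (simp add: sum.distrib sum_distrib_left algebra_simps)
  also have "1 + (\<Sum>i\<le>t. (m choose Suc i) * r ^ Suc i) = (\<Sum>i\<le>Suc t. (m choose i) * r ^ i)"
    by (subst sum.atMost_Suc_shift) simp
  finally show ?thesis .
qed

lemma ins_ball_size_Suc_Suc:
  "ins_ball_size q b (Suc n) (Suc t) =
    ins_ball_size q b n (Suc t) + (q - 1) * q ^ (b - 1) * ins_ball_size q b (Suc n) t"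
proof -
  have "q ^ (Suc t * (b - 1)) = q ^ (b - 1) * q ^ (t * (b - 1))"
    by (simp add: power_add)
  with sum_choose_Suc_Suc[where r = "q - 1" and m = "n + t + 1"] show ?thesis
    unfolding ins_ball_size_def atLeast0AtMost by (simp add: algebra_simps)
qed

lemma ins_ball_size_0:
  assumes "1 \<le> q" "1 \<le> b"
  shows "ins_ball_size q b 0 t = q ^ (t * b)"
proof -
  have "(\<Sum>i = 0..t. (t choose i) * (q - 1) ^ i) = q ^ t"
    using binomial[of "q - 1" 1 t] assms(1) by (simp add: atLeast0AtMost)
  moreover have "t * b = t * (b - 1) + t" using assms(2) by (simp add: algebra_simps)
  ultimately show ?thesis unfolding ins_ball_size_def by (simp add: power_add)
qed

lemma card_ins_ball:
  assumes "1 \<le> q" "1 \<le> b"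
  shows "set x \<subseteq> {..<q} \<Longrightarrow> card (ins_ball q t b x) = ins_ball_size q b (length x) t"
proof (induction x arbitrary: t)
  case Nil
  then show ?case using assms by (simp add: ins_ball_Nil card_seqs ins_ball_size_0)
next
  case (Cons a x)
  then have "set x \<subseteq> {..<q}" by simp
  show ?case
  proof (induction t)
    case 0
    then show ?case by (simp add: ins_ball_size_def)
  next
    case (Suc t)
    with Cons.IH[OF \<open>set x \<subseteq> {..<q}\<close>] show ?case
      by (simp del: ins_ball.simps
          add: card_ins_ball_Suc_Cons[OF assms(2) Cons.prems] ins_ball_size_Suc_Suc)
  qed
qed

theorem theorem3p1:
  fixes n t q b :: nat
  assumes "q \<ge> 2" and "b \<ge> 1"
  shows "(\<forall>x \<in> seqs q n. card (ins_ball q t b x) =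
            q ^ (t * (b - 1)) * (\<Sum>i = 0..t. ((n + t) choose i) * (q - 1) ^ i))
       \<and> I_max q b n t = q ^ (t * (b - 1)) * (\<Sum>i = 0..t. ((n + t) choose i) * (q - 1) ^ i)"
proof -
  have all: "\<forall>x \<in> seqs q n. card (ins_ball q t b x) = ins_ball_size q b n t"
    using card_ins_ball assms by (auto simp: seqs_def)
  moreover have "replicate n 0 \<in> seqs q n"
    using assms by (auto simp: seqs_def)
  ultimately have "(\<lambda>x. card (ins_ball q t b x)) ` seqs q n = {ins_ball_size q b n t}"
    by force
  with all show ?thesis unfolding I_max_def ins_ball_size_def by simp
qed

end
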